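(* Let $H$ be a graph with at least one edge and no isolated vertices, and suppose $H$ is not isomorphic to a star $K_{1,m}$ for any $m\ge1$. Let $t\ge1$, and let $C$ be the graph obtained from $\mu_t(H)$ by adding $\ell\ge1$ new vertices, each adjacent only to the root $w$. Then $\det(C)=\det(\mu_t(H))+\ell-1$.
   Context: All graphs are finite and simple. For a graph $G$ with $V(G)=\{v_1,\dots,v_n\}$ and an integer $t\ge1$, the generalized Mycielskian $\mu_t(G)$ has vertex set $\{u_i^s: 1\le i\le n,\ 0\le s\le t\}\cup\{w\}$, where $u_i^0$ is identified with $v_i$. Its edges are: $u_i^0u_j^0$ for each edge $v_iv_j$ of $G$; $u_i^su_j^{s+1}$ and $u_j^su_i^{s+1}$ for each edge $v_iv_j$ of $G$ and each $0\le s<t$; and $u_i^tw$ for all $1\le i\le n$; $w$ is the root. A set $S\subseteq V(G)$ is a determining set for $G$ if the only automorphism of $G$ fixing every vertex of $S$ is the identity; $\det(G)$ is the minimum size of a determining set. *)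

theory Defs
  imports Main
begin

definition graph :: "'a set \<Rightarrow> ('a \<Rightarrow> 'a \<Rightarrow> bool) \<Rightarrow> bool" where
  "graph V E \<longleftrightarrow> finite V \<and> (\<forall>x y. E x y \<longrightarrow> x \<in> V \<and> y \<in> V)
     \<and> (\<forall>x y. E x y \<longrightarrow> E y x) \<and> (\<forall>x. \<not> E x x)"

definition automorphism :: "'a set \<Rightarrow> ('a \<Rightarrow> 'a \<Rightarrow> bool) \<Rightarrow> ('a \<Rightarrow> 'a) \<Rightarrow> bool" where
  "automorphism V E f \<longleftrightarrow> bij_betw f V V \<and> (\<forall>x\<in>V. \<forall>y\<in>V. E (f x) (f y) \<longleftrightarrow> E x y)"

definition determining_set :: "'a set \<Rightarrow> ('a \<Rightarrow> 'a \<Rightarrow> bool) \<Rightarrow> 'a set \<Rightarrow> bool" where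
  "determining_set V E S \<longleftrightarrow> S \<subseteq> V \<and>
     (\<forall>f. automorphism V E f \<and> (\<forall>x\<in>S. f x = x) \<longrightarrow> (\<forall>x\<in>V. f x = x))"

definition determining_number :: "'a set \<Rightarrow> ('a \<Rightarrow> 'a \<Rightarrow> bool) \<Rightarrow> nat" where
  "determining_number V E = Min (card ` {S. determining_set V E S})"

definition has_edge :: "'a set \<Rightarrow> ('a \<Rightarrow> 'a \<Rightarrow> bool) \<Rightarrow> bool" where
  "has_edge V E \<longleftrightarrow> (\<exists>x\<in>V. \<exists>y\<in>V. E x y)"

definition no_isolated :: "'a set \<Rightarrow> ('a \<Rightarrow> 'a \<Rightarrow> bool) \<Rightarrow> bool" where
  "no_isolated V E \<longleftrightarrow> (\<forall>x\<in>V. \<exists>y\<in>V. E x y)"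

definition is_star :: "'a set \<Rightarrow> ('a \<Rightarrow> 'a \<Rightarrow> bool) \<Rightarrow> bool" where
  "is_star V E \<longleftrightarrow> card V \<ge> 2 \<and>
     (\<exists>c\<in>V. \<forall>x\<in>V. \<forall>y\<in>V. E x y \<longleftrightarrow> (x \<noteq> y \<and> (x = c \<or> y = c)))"

text \<open>Vertices of the generalized Mycielskian: U v s stands for u_v^s (U v 0 = v), Root = w.\<close>
datatype 'a myc_vertex = U 'a nat | Root

definition myc_V :: "'a set \<Rightarrow> nat \<Rightarrow> 'a myc_vertex set" where
  "myc_V V t = {U v s | v s. v \<in> V \<and> s \<le> t} \<union> {Root}"

fun myc_E :: "('a \<Rightarrow> 'a \<Rightarrow> bool) \<Rightarrow> nat \<Rightarrow> 'a myc_vertex \<Rightarrow> 'a myc_vertex \<Rightarrow> bool" where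
  "myc_E E t (U x s) (U y r) \<longleftrightarrow>
     E x y \<and> ((s = 0 \<and> r = 0) \<or> (s < t \<and> r = s + 1) \<or> (r < t \<and> s = r + 1))"
| "myc_E E t (U x s) Root \<longleftrightarrow> s = t"
| "myc_E E t Root (U y r) \<longleftrightarrow> r = t"
| "myc_E E t Root Root \<longleftrightarrow> False"

text \<open>The graph C: mu_t(H) plus l new pendant vertices Inr k (k < l), each adjacent only to the root.\<close>
definition pend_V :: "'a set \<Rightarrow> nat \<Rightarrow> nat \<Rightarrow> ('a myc_vertex + nat) set" where
  "pend_V V t l = Inl ` myc_V V t \<union> Inr ` {..<l}"

fun pend_E :: "('a \<Rightarrow> 'a \<Rightarrow> bool) \<Rightarrow> nat \<Rightarrow> nat \<Rightarrow> ('a myc_vertex + nat) \<Rightarrow> ('a myc_vertex + nat) \<Rightarrow> bool" where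
  "pend_E E t l (Inl a) (Inl b) \<longleftrightarrow> myc_E E t a b"
| "pend_E E t l (Inl a) (Inr k) \<longleftrightarrow> a = Root \<and> k < l"
| "pend_E E t l (Inr k) (Inl b) \<longleftrightarrow> b = Root \<and> k < l"
| "pend_E E t l (Inr k) (Inr j) \<longleftrightarrow> False"

end

theory Submission
  imports Defs
begin

(*
  The root w of mu_t(H) has three properties preserved by automorphisms: its neighbourhood is
  independent, its degree is |V(H)|, and every vertex z other than w that is not adjacent to w but
  shares a neighbour with it has exactly half of its neighbours in common with w. If H is not a star,
  no vertex u_i^s has all three. For s = t the degree makes i adjacent to all other vertices of H, and
  an edge of H avoiding i violates the halving property. For s < t the halving and independence
  properties force every neighbour of i to be a leaf; the image of u_i^t is then a neighbour of u_i^s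
  of degree 2, so i has degree 1 and H is a single edge.

  Hence every automorphism of mu_t(H) fixes w. As H has no isolated vertices, the pendant vertices of
  C are exactly its vertices of degree 1, so the automorphisms of C are precisely the automorphisms of
  mu_t(H) combined with arbitrary permutations of the pendant vertices. A minimum determining set of C
  therefore consists of one of mu_t(H) together with all pendant vertices but one.
*)

definition neighbours :: "'v set \<Rightarrow> ('v \<Rightarrow> 'v \<Rightarrow> bool) \<Rightarrow> 'v \<Rightarrow> 'v set" where
  "neighbours W F v = {u \<in> W. F v u}"

lemma neighbours_subset: "neighbours W F v \<subseteq> W"
  unfolding neighbours_def by auto

lemma automorphism_inj_on: "automorphism W F f \<Longrightarrow> inj_on f W"
  unfolding automorphism_def bij_betw_def by auto

lemma automorphism_mem: "automorphism W F f \<Longrightarrow> v \<in> W \<Longrightarrow> f v \<in> W"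
  unfolding automorphism_def bij_betw_def by auto

lemma automorphism_surj: "automorphism W F f \<Longrightarrow> u \<in> W \<Longrightarrow> \<exists>v\<in>W. u = f v"
  unfolding automorphism_def bij_betw_def by auto

lemma automorphism_edge_iff:
  "automorphism W F f \<Longrightarrow> a \<in> W \<Longrightarrow> b \<in> W \<Longrightarrow> F (f a) (f b) \<longleftrightarrow> F a b"
  unfolding automorphism_def by auto

lemma automorphism_image_neighbours:
  assumes "automorphism W F f" "v \<in> W"
  shows "f ` neighbours W F v = neighbours W F (f v)"
proof (intro equalityI subsetI)
  fix u assume "u \<in> f ` neighbours W F v"
  then show "u \<in> neighbours W F (f v)"
    using automorphism_mem[OF assms(1)] automorphism_edge_iff[OF assms] unfolding neighbours_def by blast
next
  fix u assume "u \<in> neighbours W F (f v)"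
  then obtain u' where "u' \<in> W" "u = f u'" "F (f v) (f u')"
    using automorphism_surj[OF assms(1)] unfolding neighbours_def by blast
  then show "u \<in> f ` neighbours W F v"
    using automorphism_edge_iff[OF assms] unfolding neighbours_def by blast
qed

lemma automorphism_common_neighbours:
  assumes "automorphism W F f" "a \<in> W" "b \<in> W"
  shows "neighbours W F (f a) \<inter> neighbours W F (f b) = f ` (neighbours W F a \<inter> neighbours W F b)"
  using inj_on_image_Int[OF automorphism_inj_on[OF assms(1)] neighbours_subset neighbours_subset]
    automorphism_image_neighbours[OF assms(1,2)] automorphism_image_neighbours[OF assms(1,3)]
  by simp

lemma card_automorphism_image:
  "automorphism W F f \<Longrightarrow> A \<subseteq> W \<Longrightarrow> card (f ` A) = card A"
  by (meson automorphism_inj_on card_image inj_on_subset)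

lemma card_neighbours_automorphism:
  assumes "automorphism W F f" "v \<in> W"
  shows "card (neighbours W F (f v)) = card (neighbours W F v)"
  unfolding automorphism_image_neighbours[OF assms, symmetric]
  by (rule card_automorphism_image[OF assms(1) neighbours_subset])

lemma card_common_neighbours_automorphism:
  assumes "automorphism W F f" "a \<in> W" "b \<in> W"
  shows "card (neighbours W F (f a) \<inter> neighbours W F (f b))
       = card (neighbours W F a \<inter> neighbours W F b)"
  unfolding automorphism_common_neighbours[OF assms]
  by (rule card_automorphism_image[OF assms(1)]) (use neighbours_subset[of W F a] in blast)

lemma automorphism_image_vertices_of_degree:
  assumes f: "automorphism W F f"
  shows "f ` {v \<in> W. card (neighbours W F v) = d} = {v \<in> W. card (neighbours W F v) = d}"
proof (intro equalityI subsetI)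
  fix u assume "u \<in> f ` {v \<in> W. card (neighbours W F v) = d}"
  then show "u \<in> {v \<in> W. card (neighbours W F v) = d}"
    using automorphism_mem[OF f] card_neighbours_automorphism[OF f] by auto
next
  fix u assume u: "u \<in> {v \<in> W. card (neighbours W F v) = d}"
  then obtain v where "v \<in> W" "u = f v"
    using automorphism_surj[OF f] by blast
  then show "u \<in> f ` {v \<in> W. card (neighbours W F v) = d}"
    using u card_neighbours_automorphism[OF f] by auto
qed

definition halving_vertex :: "'v set \<Rightarrow> ('v \<Rightarrow> 'v \<Rightarrow> bool) \<Rightarrow> 'v \<Rightarrow> bool" where
  "halving_vertex W F v \<longleftrightarrow> (\<forall>z\<in>W. z \<noteq> v \<longrightarrow> \<not> F v z \<longrightarrow>
      neighbours W F z \<inter> neighbours W F v \<noteq> {} \<longrightarrow>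
      2 * card (neighbours W F z \<inter> neighbours W F v) = card (neighbours W F z))"

definition independent_neighbourhood :: "'v set \<Rightarrow> ('v \<Rightarrow> 'v \<Rightarrow> bool) \<Rightarrow> 'v \<Rightarrow> bool" where
  "independent_neighbourhood W F v \<longleftrightarrow>
     (\<forall>a\<in>neighbours W F v. \<forall>b\<in>neighbours W F v. \<not> F a b)"

lemma halving_vertex_automorphism:
  assumes f: "automorphism W F f" and v: "v \<in> W" and "halving_vertex W F v"
  shows "halving_vertex W F (f v)"
  unfolding halving_vertex_def
proof (intro ballI impI)
  fix z assume z: "z \<in> W" "z \<noteq> f v" "\<not> F (f v) z"
    "neighbours W F z \<inter> neighbours W F (f v) \<noteq> {}"
  obtain z' where z': "z' \<in> W" "z = f z'" using automorphism_surj[OF f z(1)] by blast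
  have "z' \<noteq> v" "\<not> F v z'"
    using z(2,3) z'(2) automorphism_edge_iff[OF f v z'(1)] by auto
  moreover have "neighbours W F z' \<inter> neighbours W F v \<noteq> {}"
    using z(4) unfolding z'(2) automorphism_common_neighbours[OF f z'(1) v] by blast
  ultimately have "2 * card (neighbours W F z' \<inter> neighbours W F v) = card (neighbours W F z')"
    using \<open>halving_vertex W F v\<close> z'(1) unfolding halving_vertex_def by blast
  then show "2 * card (neighbours W F z \<inter> neighbours W F (f v)) = card (neighbours W F z)"
    unfolding z'(2) card_common_neighbours_automorphism[OF f z'(1) v]
      card_neighbours_automorphism[OF f z'(1)] .
qed

lemma independent_neighbourhood_automorphism:
  assumes f: "automorphism W F f" and v: "v \<in> W" and "independent_neighbourhood W F v"
  shows "independent_neighbourhood W F (f v)"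
  unfolding independent_neighbourhood_def automorphism_image_neighbours[OF f v, symmetric]
proof (intro ballI)
  fix a b assume "a \<in> f ` neighbours W F v" "b \<in> f ` neighbours W F v"
  then obtain a' b' where "a' \<in> neighbours W F v" "b' \<in> neighbours W F v" "a = f a'" "b = f b'"
    by blast
  moreover have "a' \<in> W" "b' \<in> W"
    using calculation(1,2) neighbours_subset[of W F v] by blast+
  ultimately show "\<not> F a b"
    using \<open>independent_neighbourhood W F v\<close> automorphism_edge_iff[OF f]
    unfolding independent_neighbourhood_def by auto
qed

lemma finite_determining_sets: "finite V \<Longrightarrow> finite {S. determining_set V E S}"
  by (rule finite_subset[of _ "Pow V"]) (auto simp: determining_set_def)

lemma determining_number_le:
  "finite V \<Longrightarrow> determining_set V E S \<Longrightarrow> determining_number V E \<le> card S"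
  unfolding determining_number_def by (auto intro!: Min_le finite_determining_sets)

lemma determining_number_attained:
  assumes "finite V"
  obtains S where "determining_set V E S" "card S = determining_number V E"
proof -
  have "determining_set V E V"
    unfolding determining_set_def by auto
  then have "determining_number V E \<in> card ` {S. determining_set V E S}"
    unfolding determining_number_def using finite_determining_sets[OF assms] by (intro Min_in) auto
  then show ?thesis using that by auto
qed

lemma is_star_if_dominating:
  assumes "graph V E" "card V \<ge> 2" "i \<in> V" "\<forall>j\<in>V. j \<noteq> i \<longrightarrow> E i j"
    "\<forall>a b. E a b \<longrightarrow> a = i \<or> b = i"
  shows "is_star V E"
  using assms unfolding is_star_def graph_def by metis

lemma is_star_if_card_two:
  assumes "graph V E" "card V = 2" "E i j"
  shows "is_star V E"
proof -
  have "i \<in> V" "j \<in> V" "i \<noteq> j"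
    using assms(1,3) unfolding graph_def by auto
  then have "V = {i, j}"
    using assms(1,2) unfolding graph_def by (intro card_subset_eq[symmetric]) auto
  moreover have "\<forall>a b. E a b \<longrightarrow> a = i \<or> b = i"
    using assms(1) \<open>V = {i, j}\<close> unfolding graph_def by blast
  ultimately show ?thesis
    using is_star_if_dominating[OF assms(1)] assms(2,3) \<open>i \<in> V\<close> by auto
qed

lemma card_ge_2_if_has_edge:
  assumes "graph V E" "has_edge V E"
  shows "card V \<ge> 2"
proof -
  obtain x y where "x \<in> V" "y \<in> V" "E x y"
    using assms(2) unfolding has_edge_def by blast
  moreover have "x \<noteq> y" using assms(1) \<open>E x y\<close> unfolding graph_def by blast
  ultimately show ?thesis
    using card_mono[of V "{x, y}"] assms(1) unfolding graph_def by auto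
qed

definition cells :: "'a set \<Rightarrow> nat set \<Rightarrow> 'a myc_vertex set" where
  "cells A Q = {U j q | j q. j \<in> A \<and> q \<in> Q}"

lemma U_in_cells [simp]: "U j q \<in> cells A Q \<longleftrightarrow> j \<in> A \<and> q \<in> Q"
  unfolding cells_def by auto

lemma Root_notin_cells [simp]: "Root \<notin> cells A Q"
  unfolding cells_def by auto

lemma cells_Int_cells [simp]: "cells A Q \<inter> cells B R = cells (A \<inter> B) (Q \<inter> R)"
  unfolding cells_def by auto

lemma cells_eq_empty_iff [simp]: "cells A Q = {} \<longleftrightarrow> A = {} \<or> Q = {}"
  unfolding cells_def by auto

lemma cells_eq_image: "cells A Q = case_prod U ` (A \<times> Q)"
  unfolding cells_def by auto

lemma finite_cells [simp]: "finite A \<Longrightarrow> finite Q \<Longrightarrow> finite (cells A Q)"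
  unfolding cells_eq_image by simp

lemma card_cells:
  assumes "finite A" "finite Q"
  shows "card (cells A Q) = card A * card Q"
proof -
  have "inj_on (case_prod U) (A \<times> Q)"
    by (auto simp: inj_on_def)
  then show ?thesis
    using assms by (simp add: cells_eq_image card_image card_cartesian_product)
qed

text \<open>The layers holding the non-root neighbours of u_k^s. For s = 0 the truncated
  difference s - 1 = 0 accounts for the edges of H inside layer 0.\<close>
definition neighbour_layers :: "nat \<Rightarrow> nat \<Rightarrow> nat set" where
  "neighbour_layers t s = {s - 1, s + 1} \<inter> {..t}"

lemma card_neighbour_layers:
  "1 \<le> t \<Longrightarrow> s \<le> t \<Longrightarrow> card (neighbour_layers t s) = (if s < t then 2 else 1)"
  unfolding neighbour_layers_def by (cases "s = 0") (auto simp: Int_insert_left)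

lemma neighbour_layers_nonempty: "s \<le> t \<Longrightarrow> neighbour_layers t s \<noteq> {}"
  unfolding neighbour_layers_def by auto

text \<open>The last clause rules out |r - s| = 1 for s >= 2, so that u_k^r and u_i^s are not adjacent;
  for s <= 1 non-adjacency comes from the independence of the neighbourhood of u_i^s instead.\<close>
lemma exists_layer_meeting_once:
  assumes "s < t"
  obtains r where "r \<le> t" "card (neighbour_layers t r \<inter> neighbour_layers t s) = 1"
    "2 \<le> s \<Longrightarrow> r \<noteq> s + 1 \<and> s \<noteq> r + 1"
proof -
  consider "s + 2 \<le> t" | "2 \<le> s" "t = s + 1" | "s = 0" "t = 1" | "s = 1" "t = 2"
    using assms by linarith
  then show ?thesis
  proof cases
    case 1
    then have "neighbour_layers t (s + 2) \<inter> neighbour_layers t s = {s + 1}"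
      unfolding neighbour_layers_def by auto
    then show ?thesis using 1 by (intro that[of "s + 2"]) auto
  next
    case 2
    then have "neighbour_layers t (s - 2) \<inter> neighbour_layers t s = {s - 1}"
      unfolding neighbour_layers_def by auto
    then show ?thesis using 2 by (intro that[of "s - 2"]) auto
  next
    case 3
    then have "neighbour_layers t 1 \<inter> neighbour_layers t s = {0}"
      unfolding neighbour_layers_def by auto
    then show ?thesis using 3 by (intro that[of 1]) auto
  next
    case 4
    then have "neighbour_layers t 0 \<inter> neighbour_layers t s = {0}"
      unfolding neighbour_layers_def by auto
    then show ?thesis using 4 by (intro that[of 0]) auto
  qed
qed

locale mycielskian =
  fixes V :: "'a set" and E :: "'a \<Rightarrow> 'a \<Rightarrow> bool" and t :: nat
  assumes graph: "graph V E" and t_pos: "t \<ge> 1"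
begin

abbreviation "W \<equiv> myc_V V t"
abbreviation "F \<equiv> myc_E E t"

lemma finite_V: "finite V"
  using graph unfolding graph_def by blast

lemma E_sym: "E x y \<Longrightarrow> E y x"
  using graph unfolding graph_def by blast

lemma E_irrefl: "\<not> E x x"
  using graph unfolding graph_def by blast

lemma E_in_V: "E x y \<Longrightarrow> x \<in> V \<and> y \<in> V"
  using graph unfolding graph_def by blast

lemma finite_neighbours_H [simp]: "finite (neighbours V E k)"
  using finite_V neighbours_subset by (rule finite_subset[rotated])

lemma mem_neighbours_H [simp]: "j \<in> neighbours V E k \<longleftrightarrow> E k j"
  using E_in_V unfolding neighbours_def by blast

lemma U_in_myc_V [simp]: "U k s \<in> W \<longleftrightarrow> k \<in> V \<and> s \<le> t"
  unfolding myc_V_def by auto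

lemma Root_in_myc_V [simp]: "Root \<in> W"
  unfolding myc_V_def by auto

lemma finite_myc_V: "finite W"
proof -
  have "W = cells V {..t} \<union> {Root}"
    unfolding myc_V_def cells_def by auto
  then show ?thesis
    using finite_V by simp
qed

lemma neighbours_Root: "neighbours W F Root = cells V {t}"
proof (rule set_eqI)
  fix u show "u \<in> neighbours W F Root \<longleftrightarrow> u \<in> cells V {t}"
    by (cases u) (auto simp: neighbours_def)
qed

lemma neighbours_U:
  assumes "k \<in> V" "s \<le> t"
  shows "neighbours W F (U k s)
       = cells (neighbours V E k) (neighbour_layers t s) \<union> (if s = t then {Root} else {})"
proof (rule set_eqI)
  fix u show "u \<in> neighbours W F (U k s) \<longleftrightarrow>
      u \<in> cells (neighbours V E k) (neighbour_layers t s) \<union> (if s = t then {Root} else {})"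
    using assms t_pos E_in_V by (cases u) (auto simp: neighbours_def neighbour_layers_def)
qed

lemma card_neighbours_U:
  assumes "k \<in> V" "s \<le> t"
  shows "card (neighbours W F (U k s))
       = card (neighbours V E k) * card (neighbour_layers t s) + (if s = t then 1 else 0)"
  using neighbours_U[OF assms] by (simp add: card_cells neighbour_layers_def)

lemma card_common_neighbours_U:
  assumes "k \<in> V" "i \<in> V" "r \<le> t" "s \<le> t"
  shows "card (neighbours W F (U k r) \<inter> neighbours W F (U i s))
       = card (neighbours V E k \<inter> neighbours V E i)
           * card (neighbour_layers t r \<inter> neighbour_layers t s)
         + (if r = t \<and> s = t then 1 else 0)"
proof -
  have "neighbours W F (U k r) \<inter> neighbours W F (U i s)
      = cells (neighbours V E k \<inter> neighbours V E i) (neighbour_layers t r \<inter> neighbour_layers t s)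
        \<union> (if r = t \<and> s = t then {Root} else {})"
    unfolding neighbours_U[OF assms(1,3)] neighbours_U[OF assms(2,4)] by auto
  then show ?thesis
    by (simp add: card_cells neighbour_layers_def)
qed

lemma halving_vertex_U_equation:
  assumes "halving_vertex W F (U i s)" "i \<in> V" "k \<in> V" "r \<le> t" "s \<le> t"
    "U k r \<noteq> U i s" "\<not> F (U i s) (U k r)"
    "neighbours V E k \<inter> neighbours V E i \<noteq> {}"
    "neighbour_layers t r \<inter> neighbour_layers t s \<noteq> {}"
  shows "2 * (card (neighbours V E k \<inter> neighbours V E i)
                * card (neighbour_layers t r \<inter> neighbour_layers t s)
              + (if r = t \<and> s = t then 1 else 0))
       = card (neighbours V E k) * card (neighbour_layers t r) + (if r = t then 1 else 0)"
proof -
  have "neighbours W F (U k r) \<inter> neighbours W F (U i s) \<noteq> {}"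
    using assms(8,9) unfolding neighbours_U[OF assms(3,4)] neighbours_U[OF assms(2,5)] by auto
  then show ?thesis
    using assms(1,6,7) assms(2-5)
    unfolding halving_vertex_def card_common_neighbours_U[OF assms(3,2,4,5), symmetric]
      card_neighbours_U[OF assms(3,4), symmetric]
    by simp
qed

lemma halving_vertex_Root: "halving_vertex W F Root"
  unfolding halving_vertex_def
proof (intro ballI impI)
  fix z assume z: "z \<in> W" "z \<noteq> Root" "\<not> F Root z"
    "neighbours W F z \<inter> neighbours W F Root \<noteq> {}"
  then obtain k s where ks: "z = U k s" "k \<in> V" "s < t"
    by (cases z) auto
  have "neighbours W F z \<inter> neighbours W F Root = cells (neighbours V E k) (neighbour_layers t s \<inter> {t})"
    using ks neighbours_subset[of V E k]
    unfolding ks(1) neighbours_Root neighbours_U[OF ks(2) less_imp_le[OF ks(3)]]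
    by (auto simp: Int_absorb2)
  moreover have "neighbour_layers t s \<inter> {t} = {t}"
    using z(4) calculation ks(3) unfolding neighbour_layers_def by auto
  ultimately show "2 * card (neighbours W F z \<inter> neighbours W F Root) = card (neighbours W F z)"
    using ks card_neighbours_U[OF ks(2)] card_neighbour_layers[OF t_pos] by (simp add: card_cells)
qed

lemma independent_neighbourhood_Root: "independent_neighbourhood W F Root"
  unfolding independent_neighbourhood_def neighbours_Root using t_pos by (auto simp: cells_def)

lemma neighbours_eq_if_dominating:
  assumes "i \<in> V" "card (neighbours V E i) + 1 = card V"
  shows "neighbours V E i = V - {i}"
proof (rule card_subset_eq)
  show "neighbours V E i \<subseteq> V - {i}"
    unfolding neighbours_def using E_irrefl by auto
  show "card (neighbours V E i) = card (V - {i})"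
    using assms finite_V by simp
qed (simp add: finite_V)

lemma not_halving_if_dominating:
  assumes "\<not> is_star V E" "has_edge V E" "i \<in> V"
    and dominating: "card (neighbours V E i) + 1 = card V"
  shows "\<not> halving_vertex W F (U i t)"
proof
  assume halving: "halving_vertex W F (U i t)"
  have N_i: "neighbours V E i = V - {i}"
    by (rule neighbours_eq_if_dominating[OF \<open>i \<in> V\<close> dominating])
  then have "\<forall>j\<in>V. j \<noteq> i \<longrightarrow> E i j"
    using mem_neighbours_H[of _ i] by blast
  then have "\<not> (\<forall>a b. E a b \<longrightarrow> a = i \<or> b = i)"
    using is_star_if_dominating[OF graph card_ge_2_if_has_edge[OF graph \<open>has_edge V E\<close>] \<open>i \<in> V\<close>]
      \<open>\<not> is_star V E\<close> by blast
  then obtain k k' where kk': "E k k'" "k \<noteq> i" "k' \<noteq> i"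
    by blast
  have k: "k \<in> V"
    using kk'(1) E_in_V by blast
  then have "E k i"
    using N_i kk'(2) mem_neighbours_H[of k i] E_sym by blast
  have "card {i, k'} \<le> card (neighbours V E k)"
    using \<open>E k i\<close> kk'(1) by (intro card_mono) auto
  then have "card (neighbours V E k) \<ge> 2"
    using kk'(3) by simp
  have "\<not> neighbours V E k \<subseteq> {i}"
    using kk'(1,3) by auto
  have common: "neighbours V E k \<inter> neighbours V E i = neighbours V E k - {i}"
    using N_i neighbours_subset[of V E k] by blast
  have "U k t \<noteq> U i t" "\<not> F (U i t) (U k t)"
    using kk'(2) t_pos by auto
  then have "2 * (card (neighbours V E k - {i}) * card (neighbour_layers t t) + 1)
      = card (neighbours V E k) * card (neighbour_layers t t) + 1"
    using halving_vertex_U_equation[OF halving \<open>i \<in> V\<close> k order_refl order_refl]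
      neighbour_layers_nonempty[of t t] \<open>\<not> neighbours V E k \<subseteq> {i}\<close>
    unfolding common by simp
  moreover have "card (neighbour_layers t t) = 1"
    using card_neighbour_layers[OF t_pos order_refl] by simp
  moreover have "card (neighbours V E k - {i}) = card (neighbours V E k) - 1"
    using \<open>E k i\<close> by simp
  ultimately show False
    using \<open>card (neighbours V E k) \<ge> 2\<close> by simp
qed

lemma independent_neighbourhood_low_layer:
  assumes "independent_neighbourhood W F (U i s)" "i \<in> V" "s \<le> 1" "E i j" "E i k"
  shows "\<not> E j k"
proof
  assume "E j k"
  have "U j (s - 1) \<in> neighbours W F (U i s)" "U k (s - 1) \<in> neighbours W F (U i s)"
    using assms(2-5) t_pos neighbours_U[OF assms(2)] by (auto simp: neighbour_layers_def)
  moreover have "F (U j (s - 1)) (U k (s - 1))"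
    using \<open>E j k\<close> assms(3) by simp
  ultimately show False
    using assms(1) unfolding independent_neighbourhood_def by blast
qed

text \<open>Let C be the set of common neighbours of k and i in H. The halving property at u_i^s applied
  to u_k^s gives deg k = 2 |C|; applied to a vertex u_k^r whose neighbour layers meet those of u_i^s
  in a single layer it gives 2 |C| = deg k * |neighbour_layers t r| + [r = t], which is impossible.\<close>
lemma neighbours_leaves_if_halving:
  assumes i: "i \<in> V" and s: "s < t"
    and halving: "halving_vertex W F (U i s)"
    and independent: "independent_neighbourhood W F (U i s)"
    and "E i j" "E j k"
  shows "k = i"
proof (rule ccontr)
  assume "k \<noteq> i"
  define C where "C = neighbours V E k \<inter> neighbours V E i"
  have k: "k \<in> V" using \<open>E j k\<close> E_in_V by blast
  have "j \<in> C"
    using \<open>E i j\<close> E_sym[OF \<open>E j k\<close>] unfolding C_def by auto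
  then have C: "C \<noteq> {}" "card C \<ge> 1"
    unfolding C_def by (auto simp: Suc_le_eq card_gt_0_iff)
  have low_edge: "\<not> E i k" if "s \<le> 1"
    using independent_neighbourhood_low_layer[OF independent i that \<open>E i j\<close>] \<open>E j k\<close> by blast
  have "U k s \<noteq> U i s" "\<not> F (U i s) (U k s)"
    using \<open>k \<noteq> i\<close> low_edge by (cases "s \<le> 1"; simp)+
  then have "2 * (card C * 2) = card (neighbours V E k) * 2"
    using halving_vertex_U_equation[OF halving i k less_imp_le[OF s] less_imp_le[OF s]]
      C s neighbour_layers_nonempty[of s t] card_neighbour_layers[OF t_pos less_imp_le[OF s]]
    unfolding C_def by simp
  then have degree_k: "card (neighbours V E k) = 2 * card C"
    by simp
  obtain r where r: "r \<le> t" "card (neighbour_layers t r \<inter> neighbour_layers t s) = 1"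
    "2 \<le> s \<Longrightarrow> r \<noteq> s + 1 \<and> s \<noteq> r + 1"
    using exists_layer_meeting_once[OF s] by blast
  have "U k r \<noteq> U i s" "\<not> F (U i s) (U k r)"
    using \<open>k \<noteq> i\<close> r(3) low_edge by (cases "s \<le> 1"; auto)+
  moreover have "neighbour_layers t r \<inter> neighbour_layers t s \<noteq> {}"
    using r(2) by (metis card.empty zero_neq_one)
  ultimately have "2 * card C = card (neighbours V E k) * card (neighbour_layers t r) + (if r = t then 1 else 0)"
    using halving_vertex_U_equation[OF halving i k r(1) less_imp_le[OF s]] C(1) r(2) s
    unfolding C_def by simp
  then show False
    using degree_k card_neighbour_layers[OF t_pos r(1)] C(2) r(1) by (cases "r < t") simp_all
qed

lemma automorphism_image_Root:
  assumes f: "automorphism W F f" and fRoot: "f Root = U i s"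
  shows "i \<in> V" "s \<le> t" "halving_vertex W F (U i s)" "independent_neighbourhood W F (U i s)"
    "card (neighbours W F (U i s)) = card V"
proof -
  show "i \<in> V" "s \<le> t"
    using automorphism_mem[OF f Root_in_myc_V] fRoot by auto
  show "halving_vertex W F (U i s)"
    using halving_vertex_automorphism[OF f Root_in_myc_V halving_vertex_Root] fRoot by simp
  show "independent_neighbourhood W F (U i s)"
    using independent_neighbourhood_automorphism[OF f Root_in_myc_V independent_neighbourhood_Root] fRoot
    by simp
  show "card (neighbours W F (U i s)) = card V"
    using card_neighbours_automorphism[OF f Root_in_myc_V] fRoot
    by (simp add: neighbours_Root card_cells finite_V)
qed

lemma automorphism_Root_not_top_layer:
  assumes "\<not> is_star V E" "has_edge V E" "automorphism W F f"
  shows "f Root \<noteq> U i t"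
proof
  assume fRoot: "f Root = U i t"
  note image = automorphism_image_Root[OF assms(3) fRoot]
  have "card (neighbours V E i) + 1 = card V"
    using image(5) card_neighbours_U[OF image(1,2)] card_neighbour_layers[OF t_pos image(2)] by simp
  then show False
    using not_halving_if_dominating[OF assms(1,2) image(1)] image(3) by simp
qed

text \<open>The image of u_i^t is a neighbour u_j^r of f w = u_i^s; as j is a leaf, u_j^r has degree 2,
  while u_i^t has degree deg i + 1. So deg i = 1 and |V| = 2 deg i = 2.\<close>
lemma automorphism_Root_not_lower_layer:
  assumes "\<not> is_star V E" "automorphism W F f" "s < t"
  shows "f Root \<noteq> U i s"
proof
  assume fRoot: "f Root = U i s"
  note image = automorphism_image_Root[OF assms(2) fRoot]
  have "U i t \<in> neighbours W F Root"
    using image(1) by (simp add: neighbours_Root)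
  then have "f (U i t) \<in> f ` neighbours W F Root"
    by (rule imageI)
  then have "f (U i t) \<in> neighbours W F (U i s)"
    unfolding automorphism_image_neighbours[OF assms(2) Root_in_myc_V] fRoot .
  then obtain j r where fU: "f (U i t) = U j r" "E i j" "r \<in> neighbour_layers t s"
    unfolding neighbours_U[OF image(1,2)] using assms(3) by (auto simp: cells_def)
  have j: "j \<in> V"
    using E_in_V[OF \<open>E i j\<close>] by simp
  have r: "r \<le> t"
    using fU(3) unfolding neighbour_layers_def by simp
  have "neighbours V E j = {i}"
  proof (rule set_eqI)
    fix k show "k \<in> neighbours V E j \<longleftrightarrow> k \<in> {i}"
      using neighbours_leaves_if_halving[OF image(1) assms(3) image(3,4) \<open>E i j\<close>, of k]
        E_sym[OF \<open>E i j\<close>] by auto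
  qed
  then have "card (neighbours W F (U j r)) = 2"
    using card_neighbours_U[OF j r] card_neighbour_layers[OF t_pos r] r by (cases "r < t") auto
  moreover have "card (neighbours W F (U j r)) = card (neighbours V E i) + 1"
    using card_neighbours_automorphism[OF assms(2), of "U i t"] fU(1) image(1)
      card_neighbours_U[OF image(1) order_refl] card_neighbour_layers[OF t_pos order_refl] by simp
  moreover have "card V = 2 * card (neighbours V E i)"
    using image(5) card_neighbours_U[OF image(1,2)] card_neighbour_layers[OF t_pos image(2)] assms(3)
    by simp
  ultimately show False
    using is_star_if_card_two[OF graph _ \<open>E i j\<close>] assms(1) by simp
qed

lemma automorphism_fixes_Root:
  assumes "\<not> is_star V E" "has_edge V E" "automorphism W F f"
  shows "f Root = Root"
proof (cases "f Root")
  case (U i s)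
  then have "s \<le> t"
    using automorphism_image_Root(2)[OF assms(3)] by blast
  then show ?thesis
    using U automorphism_Root_not_top_layer[OF assms] automorphism_Root_not_lower_layer[OF assms(1,3)]
    by (cases "s = t") auto
next
  case Root
  then show ?thesis .
qed

end

lemma card_Inl_vimage_Inr_vimage:
  fixes X :: "('a + 'b) set"
  assumes "finite X"
  shows "card X = card (Inl -` X) + card (Inr -` X)"
proof -
  have "X = Inl ` Inl -` X \<union> Inr ` Inr -` X"
  proof (rule set_eqI)
    fix x show "x \<in> X \<longleftrightarrow> x \<in> Inl ` Inl -` X \<union> Inr ` Inr -` X"
      by (cases x) auto
  qed
  also have "card \<dots> = card (Inl ` Inl -` X :: ('a + 'b) set) + card (Inr ` Inr -` X :: ('a + 'b) set)"
    by (rule card_Un_disjoint) (use assms in \<open>auto intro: finite_vimageI\<close>)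
  also have "\<dots> = card (Inl -` X) + card (Inr -` X)"
    by (rule arg_cong2[where f = "(+)"]; rule card_image) (simp_all add: inj_on_def)
  finally show ?thesis .
qed

lemma bij_betw_if_conjugate:
  assumes "inj h" "bij_betw g (h ` A) (h ` A)" "\<And>a. a \<in> A \<Longrightarrow> g (h a) = h (q a)"
  shows "bij_betw q A A"
proof (rule bij_betw_imageI)
  show "inj_on q A"
  proof (rule inj_onI)
    fix a b assume "a \<in> A" "b \<in> A" "q a = q b"
    then have "g (h a) = g (h b)"
      using assms(3) by simp
    moreover have "inj_on g (h ` A)"
      using assms(2) by (simp add: bij_betw_def)
    ultimately have "h a = h b"
      using \<open>a \<in> A\<close> \<open>b \<in> A\<close> by (simp add: inj_on_eq_iff)
    then show "a = b"
      by (rule injD[OF assms(1)])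
  qed
  have "h ` q ` A = g ` h ` A"
    unfolding image_image by (rule image_cong[OF refl]) (simp add: assms(3))
  also have "\<dots> = h ` A"
    using assms(2) by (simp add: bij_betw_def)
  finally show "q ` A = A"
    by (simp add: inj_image_eq_iff[OF assms(1)])
qed

lemma bij_betw_lessThan_fixes_last:
  assumes "bij_betw p {..<l} {..<l}" "\<And>k. k < l - 1 \<Longrightarrow> p k = k" "k < (l::nat)"
  shows "p k = k"
proof (cases "k < l - 1")
  case False
  then have "k = l - 1" using assms(3) by simp
  have "p k \<noteq> m" if "m < l - 1" for m
  proof
    assume "p k = m"
    then have "p k = p m"
      using assms(2) that by simp
    moreover have "inj_on p {..<l}"
      using assms(1) unfolding bij_betw_def by blast
    ultimately have "k = m"
      using assms(3) that by (auto dest: inj_onD)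
    then show False
      using False that by simp
  qed
  moreover have "p k < l"
    using assms(1,3) unfolding bij_betw_def by blast
  ultimately show ?thesis
    using \<open>k = l - 1\<close> by (cases "p k < l - 1") (blast, linarith)
qed (use assms(2) in simp)

locale pendant_extension = mycielskian +
  fixes l :: nat
  assumes has_edge: "has_edge V E" and no_isolated: "no_isolated V E" and not_star: "\<not> is_star V E"
begin

abbreviation "PV \<equiv> pend_V V t l"
abbreviation "PE \<equiv> pend_E E t l"

lemma Inl_in_pend_V [simp]: "Inl a \<in> PV \<longleftrightarrow> a \<in> W"
  unfolding pend_V_def by auto

lemma Inr_in_pend_V [simp]: "Inr k \<in> PV \<longleftrightarrow> k < l"
  unfolding pend_V_def by auto

lemma finite_pend_V: "finite PV"
  unfolding pend_V_def using finite_myc_V by simp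

lemma neighbours_pendant: "k < l \<Longrightarrow> neighbours PV PE (Inr k) = {Inl Root}"
  by (rule set_eqI, case_tac x) (auto simp: neighbours_def)

lemma card_neighbours_Inl:
  assumes "a \<in> W"
  shows "card (neighbours PV PE (Inl a)) \<ge> 2"
proof (cases a)
  case (U k s)
  have k: "k \<in> V" and s: "s \<le> t" using assms U by auto
  obtain j where "E k j"
    using no_isolated k unfolding no_isolated_def by blast
  then have "card (neighbours V E k) \<ge> 1"
    by (auto simp: Suc_le_eq card_gt_0_iff)
  moreover have "neighbours PV PE (Inl a) = Inl ` neighbours W F a"
    by (rule set_eqI, case_tac x) (auto simp: neighbours_def U)
  ultimately show ?thesis
    using U s card_neighbours_U[OF k s] card_neighbour_layers[OF t_pos s] by (simp add: card_image)
next
  case Root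
  have "neighbours PV PE (Inl a) = Inl ` neighbours W F Root \<union> Inr ` {..<l}"
    by (rule set_eqI, case_tac x) (auto simp: neighbours_def Root)
  moreover have "card (Inl ` cells V {t} \<union> Inr ` {..<l}) = card V + l"
    by (subst card_Un_disjoint) (auto simp: finite_V card_image card_cells)
  ultimately have "card (neighbours PV PE (Inl a)) = card V + l"
    by (simp add: neighbours_Root)
  then show ?thesis
    using card_ge_2_if_has_edge[OF graph has_edge] by simp
qed

lemma pendant_vertices: "{x \<in> PV. card (neighbours PV PE x) = 1} = Inr ` {..<l}"
proof (intro equalityI subsetI)
  fix x assume "x \<in> {x \<in> PV. card (neighbours PV PE x) = 1}"
  then show "x \<in> Inr ` {..<l}"
    using card_neighbours_Inl by (cases x) fastforce+
qed (auto simp: neighbours_pendant)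

lemma automorphism_pend_V_pendants:
  assumes "automorphism PV PE g"
  shows "g ` Inr ` {..<l} = Inr ` {..<l}"
  using automorphism_image_vertices_of_degree[OF assms, of 1] unfolding pendant_vertices .

lemma automorphism_pend_V_inner:
  assumes g: "automorphism PV PE g"
  shows "g ` Inl ` W = Inl ` W"
proof -
  have "Inl ` W = PV - Inr ` {..<l}"
    unfolding pend_V_def by auto
  moreover have "g ` (PV - Inr ` {..<l}) = g ` PV - g ` Inr ` {..<l}"
    by (rule inj_on_image_set_diff[OF automorphism_inj_on[OF g]]) (auto simp: pend_V_def)
  ultimately show ?thesis
    using g automorphism_pend_V_pendants[OF g] unfolding automorphism_def bij_betw_def by simp
qed

lemma automorphism_pend_V_decompose:
  assumes g: "automorphism PV PE g"
  obtains f p where "automorphism W F f" "bij_betw p {..<l} {..<l}"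
    "\<And>x. x \<in> PV \<Longrightarrow> g x = map_sum f p x"
proof -
  define f where "f a = projl (g (Inl a))" for a
  define p where "p k = projr (g (Inr k))" for k
  have g_Inl: "g (Inl a) = Inl (f a)" if "a \<in> W" for a
  proof -
    have "g (Inl a) \<in> g ` Inl ` W"
      using that by blast
    then obtain b where "g (Inl a) = Inl b"
      unfolding automorphism_pend_V_inner[OF g] by blast
    then show ?thesis
      by (simp add: f_def)
  qed
  have g_Inr: "g (Inr k) = Inr (p k)" if "k < l" for k
  proof -
    have "g (Inr k) \<in> g ` Inr ` {..<l}"
      using that by blast
    then obtain m where "g (Inr k) = Inr m"
      unfolding automorphism_pend_V_pendants[OF g] by blast
    then show ?thesis
      by (simp add: p_def)
  qed
  have bij_g: "bij_betw g X X" if "X \<subseteq> PV" "g ` X = X" for X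
    using bij_betw_subset[of g PV PV X X] g that unfolding automorphism_def by simp
  have "bij_betw f W W"
    using bij_betw_if_conjugate[of Inl g W f] bij_g[OF _ automorphism_pend_V_inner[OF g]] g_Inl
    by (auto simp: pend_V_def)
  moreover have "F (f a) (f b) \<longleftrightarrow> F a b" if "a \<in> W" "b \<in> W" for a b
    using automorphism_edge_iff[OF g, of "Inl a" "Inl b"] that g_Inl by simp
  ultimately have "automorphism W F f"
    unfolding automorphism_def by blast
  moreover have "bij_betw p {..<l} {..<l}"
    using bij_betw_if_conjugate[of Inr g "{..<l}" p] bij_g[OF _ automorphism_pend_V_pendants[OF g]] g_Inr
    by (auto simp: pend_V_def)
  moreover have "g x = map_sum f p x" if "x \<in> PV" for x
    using that g_Inl g_Inr by (cases x) auto
  ultimately show ?thesis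
    using that by blast
qed

lemma automorphism_pend_V_map_sum:
  assumes f: "automorphism W F f" and p: "bij_betw p {..<l} {..<l}"
  shows "automorphism PV PE (map_sum f p)"
proof -
  have Root: "f a = Root \<longleftrightarrow> a = Root" if "a \<in> W" for a
    using automorphism_fixes_Root[OF not_star has_edge f] automorphism_inj_on[OF f] that
    unfolding inj_on_def by force
  have "inj_on (map_sum f p) PV"
  proof (rule inj_onI)
    fix x y assume "x \<in> PV" "y \<in> PV" "map_sum f p x = map_sum f p y"
    then show "x = y"
      using inj_onD[OF automorphism_inj_on[OF f]] inj_onD[OF bij_betw_imp_inj_on[OF p]]
      by (cases x; cases y) auto
  qed
  moreover have "map_sum f p ` PV = Inl ` f ` W \<union> Inr ` p ` {..<l}"
    unfolding pend_V_def by (auto simp: image_Un image_image)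
  then have "map_sum f p ` PV = PV"
    using f p unfolding automorphism_def bij_betw_def pend_V_def by simp
  moreover have "PE (map_sum f p x) (map_sum f p y) \<longleftrightarrow> PE x y" if "x \<in> PV" "y \<in> PV" for x y
    using that automorphism_edge_iff[OF f] Root p unfolding bij_betw_def
    by (cases x; cases y) auto
  ultimately show ?thesis
    unfolding automorphism_def bij_betw_def by blast
qed

lemma determining_set_pend_V:
  assumes S: "determining_set W F S"
  shows "determining_set PV PE (Inl ` S \<union> Inr ` {..<l - 1})"
  unfolding determining_set_def
proof (intro conjI allI impI)
  have "S \<subseteq> W"
    using S unfolding determining_set_def by blast
  then show "Inl ` S \<union> Inr ` {..<l - 1} \<subseteq> PV"
    by auto
  fix g assume "automorphism PV PE g \<and> (\<forall>x\<in>Inl ` S \<union> Inr ` {..<l - 1}. g x = x)"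
  then have g: "automorphism PV PE g" and fixed: "\<forall>x\<in>Inl ` S \<union> Inr ` {..<l - 1}. g x = x"
    by blast+
  obtain f p where f: "automorphism W F f" and p: "bij_betw p {..<l} {..<l}"
    and g_eq: "\<And>x. x \<in> PV \<Longrightarrow> g x = map_sum f p x"
    using automorphism_pend_V_decompose[OF g] by blast
  have "f a = a" if "a \<in> S" for a
    using fixed g_eq[of "Inl a"] that \<open>S \<subseteq> W\<close> by auto
  then have f_id: "f a = a" if "a \<in> W" for a
    using S f that unfolding determining_set_def by blast
  have p_id: "p k = k" if "k < l" for k
  proof (rule bij_betw_lessThan_fixes_last[OF p _ that])
    fix k assume "k < l - 1"
    then show "p k = k"
      using fixed g_eq[of "Inr k"] by auto
  qed
  show "\<forall>x\<in>PV. g x = x"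
  proof
    fix x assume "x \<in> PV"
    then show "g x = x"
      using g_eq[OF \<open>x \<in> PV\<close>] f_id p_id by (cases x) auto
  qed
qed

lemma determining_set_pend_V_Inl:
  assumes S': "determining_set PV PE S'"
  shows "determining_set W F (Inl -` S')"
  unfolding determining_set_def
proof (intro conjI allI impI ballI)
  show "Inl -` S' \<subseteq> W"
    using S' unfolding determining_set_def by auto
  fix f a assume f: "automorphism W F f \<and> (\<forall>a\<in>Inl -` S'. f a = a)" and "a \<in> W"
  have "\<forall>x\<in>S'. map_sum f id x = x"
  proof
    fix x assume "x \<in> S'"
    then show "map_sum f id x = x"
      using f by (cases x) auto
  qed
  moreover have "automorphism PV PE (map_sum f id)"
    using automorphism_pend_V_map_sum[OF _ bij_betw_id] f by blast
  ultimately have identity: "\<forall>x\<in>PV. map_sum f id x = x"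
    using S' unfolding determining_set_def by blast
  have "Inl a \<in> PV"
    using \<open>a \<in> W\<close> by simp
  then show "f a = a"
    using bspec[OF identity] by fastforce
qed

text \<open>Two pendant vertices missing from a determining set could be swapped.\<close>
lemma card_pendants_in_determining_set:
  assumes S': "determining_set PV PE S'"
  shows "l - 1 \<le> card (Inr -` S')"
proof (rule ccontr)
  let ?K = "Inr -` S'"
  have "?K \<subseteq> {..<l}"
    using S' unfolding determining_set_def by auto
  assume "\<not> l - 1 \<le> card ?K"
  then have "2 \<le> card ({..<l} - ?K)"
    using \<open>?K \<subseteq> {..<l}\<close> by (simp add: card_Diff_subset finite_subset)
  then obtain T where "T \<subseteq> {..<l} - ?K" "card T = 2"
    by (rule obtain_subset_with_card_n)
  then obtain a b where ab: "a \<in> {..<l} - ?K" "b \<in> {..<l} - ?K" "a \<noteq> b"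
    unfolding card_2_iff by blast
  define p where "p = id(a := b, b := a)"
  have "bij_betw p {..<l} {..<l}"
    by (rule bij_betw_byWitness[where f' = p]) (use ab in \<open>auto simp: p_def\<close>)
  then have "automorphism PV PE (map_sum id p)"
    by (intro automorphism_pend_V_map_sum) (simp_all add: automorphism_def)
  moreover have "\<forall>x\<in>S'. map_sum id p x = x"
  proof
    fix x assume "x \<in> S'"
    then show "map_sum id p x = x"
      using ab unfolding p_def by (cases x) auto
  qed
  ultimately have identity: "\<forall>x\<in>PV. map_sum id p x = x"
    using S' unfolding determining_set_def by blast
  have "Inr a \<in> PV"
    using ab by simp
  then have "p a = a"
    using bspec[OF identity] by fastforce
  then show False
    using ab unfolding p_def by simp
qed

lemma determining_number_pend_V:
  "determining_number PV PE = determining_number W F + (l - 1)"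
proof (rule antisym)
  obtain S where S: "determining_set W F S" "card S = determining_number W F"
    using determining_number_attained[OF finite_myc_V] by blast
  have "finite S"
    using S(1) finite_myc_V finite_subset unfolding determining_set_def by blast
  have "determining_number PV PE \<le> card (Inl ` S \<union> Inr ` {..<l - 1})"
    using determining_number_le[OF finite_pend_V determining_set_pend_V[OF S(1)]] .
  also have "\<dots> = determining_number W F + (l - 1)"
    using \<open>finite S\<close> S(2) by (subst card_Un_disjoint) (auto simp: card_image)
  finally show "determining_number PV PE \<le> determining_number W F + (l - 1)" .
next
  obtain S' where S': "determining_set PV PE S'" "card S' = determining_number PV PE"
    using determining_number_attained[OF finite_pend_V] by blast
  have "card S' = card (Inl -` S') + card (Inr -` S')"
    using S'(1) finite_pend_V finite_subset unfolding determining_set_def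
    by (blast intro: card_Inl_vimage_Inr_vimage)
  then show "determining_number W F + (l - 1) \<le> determining_number PV PE"
    using determining_number_le[OF finite_myc_V determining_set_pend_V_Inl[OF S'(1)]]
      card_pendants_in_determining_set[OF S'(1)] S'(2) by simp
qed

end

theorem mainTheorem10:
  fixes V :: "'a set" and E :: "'a \<Rightarrow> 'a \<Rightarrow> bool" and t l :: nat
  assumes "graph V E"
    and "has_edge V E"
    and "no_isolated V E"
    and "\<not> is_star V E"
    and "t \<ge> 1"
    and "l \<ge> 1"
  shows "determining_number (pend_V V t l) (pend_E E t l)
           = determining_number (myc_V V t) (myc_E E t) + l - 1"
proof -
  interpret pendant_extension V E t l
    using assms by unfold_locales
  show ?thesis
    using determining_number_pend_V assms(6) by simp
qed

end
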